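(* Let $T$ be a metrizable Choquet simplex such that (1) $\partial_e(T)=Y\cup Z$ with $Y\cap Z=\emptyset$, (2) $Y$ and $Z$ are Borel subsets, and (3) $M_Y=\overline{\mathrm{conv}(Y)}$ and $M_Z=\overline{\mathrm{conv}(Z)}$. Then there is a continuous real affine function $f$ on $T$ with $0\le f\le1$, $f|_{M_Y}=1$ and $f|_{M_Z}=0$.
   Context: For a metrizable Choquet simplex $T$ with extremal boundary $X=\partial_e(T)$, each $t\in T$ is the barycenter of a unique Borel probability measure $\mu_t$ on $X$ (i.e. $f(t)=\int_Xf\,d\mu_t$ for all continuous affine $f$ on $T$). For a Borel subset $F\subset X$, $M_F=\{t\in T:\mu_t(X\setminus F)=0\}$, the set of points whose representing measure is concentrated on $F$. *)

theory Defs
  imports "HOL-Probability.Probability"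
begin

definition affine_fun_on :: "'a::real_vector set \<Rightarrow> ('a \<Rightarrow> real) \<Rightarrow> bool" where
  "affine_fun_on T f \<longleftrightarrow>
     (\<forall>x\<in>T. \<forall>y\<in>T. \<forall>u::real. 0 \<le> u \<and> u \<le> 1 \<longrightarrow>
        f (u *\<^sub>R x + (1 - u) *\<^sub>R y) = u * f x + (1 - u) * f y)"

definition ext_bdry :: "'a::real_vector set \<Rightarrow> 'a set" where
  "ext_bdry T = {x. x extreme_point_of T}"

definition rep_measure :: "'a::real_normed_vector set \<Rightarrow> 'a \<Rightarrow> 'a measure \<Rightarrow> bool" where
  "rep_measure T t \<mu> \<longleftrightarrow>
     sets \<mu> = sets (restrict_space borel T) \<and> space \<mu> = T \<and> prob_space \<mu> \<and>
     ext_bdry T \<in> sets \<mu> \<and> emeasure \<mu> (T - ext_bdry T) = 0 \<and>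
     (\<forall>f. continuous_on T f \<and> affine_fun_on T f \<longrightarrow> f t = (\<integral>x. f x \<partial>\<mu>))"

text \<open>Metrizable Choquet simplex: a compact convex subset of a normed space such that
  every point is the barycenter of a unique Borel probability measure on the extremal boundary.\<close>
definition metrizable_choquet_simplex :: "'a::real_normed_vector set \<Rightarrow> bool" where
  "metrizable_choquet_simplex T \<longleftrightarrow> compact T \<and> convex T \<and>
     (\<forall>t\<in>T. \<exists>!\<mu>. rep_measure T t \<mu>)"

definition rep_meas :: "'a::real_normed_vector set \<Rightarrow> 'a \<Rightarrow> 'a measure" where
  "rep_meas T t = (THE \<mu>. rep_measure T t \<mu>)"

definition M_set :: "'a::real_normed_vector set \<Rightarrow> 'a set \<Rightarrow> 'a set" where
  "M_set T F = {t\<in>T. emeasure (rep_meas T t) (ext_bdry T - F) = 0}"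

end

theory Submission
  imports Defs
begin

text \<open>The function \<open>f t = \<mu>\<^sub>t(Y)\<close> works. Uniqueness of representing measures makes \<open>t \<mapsto> \<mu>\<^sub>t\<close>
  affine (the representing measure of \<open>u x + (1 - u) y\<close> is the mixture \<open>u \<mu>\<^sub>x + (1 - u) \<mu>\<^sub>y\<close>),
  so \<open>f\<close> is affine, \<open>1\<close> on \<open>M\<^sub>Y\<close> and \<open>0\<close> on \<open>M\<^sub>Z\<close>; hence \<open>f (a y + (1 - a) z) = a\<close> for
  \<open>y \<in> M\<^sub>Y\<close>, \<open>z \<in> M\<^sub>Z\<close>. For continuity, every \<open>t \<in> T\<close> agrees on all continuous affine
  functions with a point \<open>k\<close> of the compact convex set \<open>K = conv (M\<^sub>Y \<union> M\<^sub>Z) \<supseteq> \<partial>\<^sub>eT\<close>: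
  for finitely many functions \<open>g\<close>, let \<open>k\<close> minimise \<open>\<Sum> (g k - g t)\<^sup>2\<close> over \<open>K\<close>; by the
  first-order condition \<open>h = \<Sum> (g t - g k) g\<close> is maximal on \<open>K\<close> at \<open>k\<close>, so by the barycentric
  formula \<open>h t \<le> h k\<close>, i.e. \<open>\<Sum> (g t - g k)\<^sup>2 \<le> 0\<close>; compactness of \<open>K\<close> handles all functions
  at once. Such \<open>k\<close> has the same representing measure as \<open>t\<close>, so \<open>f\<^sup>-\<^sup>1(B)\<close> is the set of points
  agreeing with a point of the compact set \<open>{a y + (1 - a) z | a \<in> B \<inter> [0,1]}\<close>, which is closed.\<close>

lemma affine_fun_on_subset: "affine_fun_on T g \<Longrightarrow> K \<subseteq> T \<Longrightarrow> affine_fun_on K g"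
  unfolding affine_fun_on_def by blast

lemma affine_fun_on_sum:
  assumes "\<And>g. g \<in> G \<Longrightarrow> affine_fun_on T g"
  shows "affine_fun_on T (\<lambda>x. \<Sum>g\<in>G. c g * g x)"
  unfolding affine_fun_on_def
proof (intro ballI allI impI)
  fix x y u assume "x \<in> T" "y \<in> T" "0 \<le> u \<and> u \<le> (1::real)"
  then have eq: "g (u *\<^sub>R x + (1 - u) *\<^sub>R y) = u * g x + (1 - u) * g y" if "g \<in> G" for g
    using assms that by (auto simp: affine_fun_on_def)
  have "(\<Sum>g\<in>G. c g * g (u *\<^sub>R x + (1 - u) *\<^sub>R y)) = (\<Sum>g\<in>G. u * (c g * g x) + (1 - u) * (c g * g y))"
    by (intro sum.cong refl, simp only: eq, simp add: algebra_simps)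
  then show "(\<Sum>g\<in>G. c g * g (u *\<^sub>R x + (1 - u) *\<^sub>R y)) =
      u * (\<Sum>g\<in>G. c g * g x) + (1 - u) * (\<Sum>g\<in>G. c g * g y)"
    by (simp add: sum.distrib sum_distrib_left)
qed

lemma nonpos_if_le_quadratic:
  fixes p D :: real
  assumes "\<And>s. 0 < s \<Longrightarrow> s \<le> 1 \<Longrightarrow> 2 * s * p \<le> s\<^sup>2 * D"
  shows "p \<le> 0"
proof (rule ccontr)
  assume "\<not> p \<le> 0"
  then have p: "0 < p" by simp
  define s where "s = min 1 (p / (\<bar>D\<bar> + 1))"
  have s: "0 < s" "s \<le> 1" using p by (auto simp: s_def)
  have "s * (2 * p) \<le> s * (s * D)" using assms[OF s] by (simp add: power2_eq_square mult.assoc)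
  then have "2 * p \<le> s * D" using s(1) by (rule mult_left_le_imp_le)
  also have "\<dots> \<le> s * \<bar>D\<bar>" using s(1) by (intro mult_left_mono) auto
  also have "\<dots> \<le> p / (\<bar>D\<bar> + 1) * \<bar>D\<bar>" by (intro mult_right_mono) (auto simp: s_def)
  also have "\<dots> < p" using p by (simp add: divide_less_eq)
  finally show False using p by simp
qed

lemma sum_squares_minimizer_variational_ineq:
  fixes v :: "('a::real_vector \<Rightarrow> real) \<Rightarrow> real"
  assumes "convex K" and aff: "\<And>g. g \<in> G \<Longrightarrow> affine_fun_on K g" and "k0 \<in> K" "k \<in> K"
    and min: "\<And>k. k \<in> K \<Longrightarrow> (\<Sum>g\<in>G. (g k0 - v g)\<^sup>2) \<le> (\<Sum>g\<in>G. (g k - v g)\<^sup>2)"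
  shows "(\<Sum>g\<in>G. (v g - g k0) * (g k - g k0)) \<le> 0"
proof (rule nonpos_if_le_quadratic)
  fix s :: real assume s: "0 < s" "s \<le> 1"
  let ?ks = "s *\<^sub>R k + (1 - s) *\<^sub>R k0"
  have "(g ?ks - v g)\<^sup>2 =
      s\<^sup>2 * (g k - g k0)\<^sup>2 - 2 * s * ((v g - g k0) * (g k - g k0)) + (g k0 - v g)\<^sup>2"
    if "g \<in> G" for g
  proof -
    have "g ?ks - v g = s * (g k - g k0) - (v g - g k0)"
      using aff[OF that] assms(3,4) s by (simp add: affine_fun_on_def algebra_simps)
    then have "(g ?ks - v g)\<^sup>2 = (s * (g k - g k0) - (v g - g k0))\<^sup>2" by (rule arg_cong)
    then show ?thesis by (simp add: power2_eq_square algebra_simps)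
  qed
  then have "(\<Sum>g\<in>G. (g ?ks - v g)\<^sup>2) = s\<^sup>2 * (\<Sum>g\<in>G. (g k - g k0)\<^sup>2)
      - 2 * s * (\<Sum>g\<in>G. (v g - g k0) * (g k - g k0)) + (\<Sum>g\<in>G. (g k0 - v g)\<^sup>2)"
    by (simp add: sum.distrib sum_subtractf sum_distrib_left)
  moreover have "(\<Sum>g\<in>G. (g k0 - v g)\<^sup>2) \<le> (\<Sum>g\<in>G. (g ?ks - v g)\<^sup>2)"
    using s by (intro min convexD[OF assms(1,4,3)]) auto
  ultimately show "2 * s * (\<Sum>g\<in>G. (v g - g k0) * (g k - g k0)) \<le> s\<^sup>2 * (\<Sum>g\<in>G. (g k - g k0)\<^sup>2)"
    by linarith
qed

lemma convex_hull_Un_eq_image: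
  fixes P Q :: "'a::real_vector set"
  assumes "convex P" "convex Q" "P \<noteq> {}" "Q \<noteq> {}"
  shows "convex hull (P \<union> Q) = (\<lambda>(a, y, z). a *\<^sub>R y + (1 - a) *\<^sub>R z) ` ({0..1} \<times> P \<times> Q)"
    (is "_ = ?J")
proof
  define S where "S b = (if b then P else Q)" for b
  have "convex hull (P \<union> Q) = convex hull (\<Union>(S ` UNIV))"
    by (simp add: S_def UNIV_bool Un_commute)
  also have "\<dots> = {\<Sum>b\<in>UNIV. c b *\<^sub>R s b | c s.
      (\<forall>b\<in>UNIV. 0 \<le> c b) \<and> sum c UNIV = 1 \<and> (\<forall>b\<in>UNIV. s b \<in> S b)}"
    using assms by (intro convex_hull_finite_union) (auto simp: S_def)
  also have "\<dots> \<subseteq> ?J"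
  proof clarify
    fix c :: "bool \<Rightarrow> real" and s assume "\<forall>b\<in>UNIV. 0 \<le> c b" "sum c UNIV = 1" "\<forall>b\<in>UNIV. s b \<in> S b"
    moreover from this have "c False = 1 - c True" by (simp add: UNIV_bool)
    ultimately show "(\<Sum>b\<in>UNIV. c b *\<^sub>R s b) \<in> ?J"
      by (intro image_eqI[where x = "(c True, s True, s False)"]) (auto simp: UNIV_bool S_def)
  qed
  finally show "convex hull (P \<union> Q) \<subseteq> ?J" .
  show "?J \<subseteq> convex hull (P \<union> Q)"
  proof clarify
    fix a y z assume "a \<in> {0..1::real}" "y \<in> P" "z \<in> Q"
    then show "a *\<^sub>R y + (1 - a) *\<^sub>R z \<in> convex hull (P \<union> Q)"
      by (intro convexD[OF convex_convex_hull] hull_inc) auto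
  qed
qed

lemma compact_convex_combinations:
  fixes P Q :: "'a::real_normed_vector set"
  assumes "compact C" "compact P" "compact Q"
  shows "compact ((\<lambda>(a, y, z). a *\<^sub>R y + (1 - a) *\<^sub>R z) ` (C \<times> P \<times> Q))"
  using assms
  by (intro compact_continuous_image compact_Times) (auto intro!: continuous_intros simp: case_prod_beta)

lemma closed_agreeing_with_compact:
  fixes T K :: "'a::first_countable_topology set" and G :: "('a \<Rightarrow> 'b::t2_space) set"
  assumes "closed T" "compact K" "K \<subseteq> T" and cont: "\<And>g. g \<in> G \<Longrightarrow> continuous_on T g"
  shows "closed {t\<in>T. \<exists>k\<in>K. \<forall>g\<in>G. g k = g t}"
  unfolding closed_sequential_limits
proof (intro allI impI, elim conjE)
  fix xs l assume xs: "\<forall>n. xs n \<in> {t\<in>T. \<exists>k\<in>K. \<forall>g\<in>G. g k = g t}" and lim: "xs \<longlonglongrightarrow> l"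
  then have xsT: "\<And>n. xs n \<in> T" by blast
  have lT: "l \<in> T" by (rule closed_sequentially[OF assms(1) xsT lim])
  have "\<forall>n. \<exists>k. k \<in> K \<and> (\<forall>g\<in>G. g k = g (xs n))" using xs by blast
  then obtain ks where ks: "\<forall>n. ks n \<in> K" "\<And>n g. g \<in> G \<Longrightarrow> g (ks n) = g (xs n)"
    by (metis choice)
  obtain k r where k: "k \<in> K" "strict_mono r" "(ks \<circ> r) \<longlonglongrightarrow> k"
    using seq_compactE[OF compact_imp_seq_compact[OF assms(2)] ks(1)] by blast
  have "g k = g l" if g: "g \<in> G" for g
  proof (rule LIMSEQ_unique)
    have "(\<lambda>n. g ((ks \<circ> r) n)) \<longlonglongrightarrow> g k"
      using ks(1) k(1) assms(3)
      by (intro continuous_on_tendsto_compose[OF cont[OF g] k(3)] always_eventually) auto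
    then show "(\<lambda>n. g ((xs \<circ> r) n)) \<longlonglongrightarrow> g k" using ks(2)[OF g] by simp
    show "(\<lambda>n. g ((xs \<circ> r) n)) \<longlonglongrightarrow> g l"
      using xsT lT LIMSEQ_subseq_LIMSEQ[OF lim k(2)]
      by (intro continuous_on_tendsto_compose[OF cont[OF g]]) (auto simp: o_def)
  qed
  with lT k(1) show "l \<in> {t\<in>T. \<exists>k\<in>K. \<forall>g\<in>G. g k = g t}" by blast
qed

definition mixture :: "real \<Rightarrow> 'a measure \<Rightarrow> 'a measure \<Rightarrow> 'a measure" where
  "mixture u M N = Giry_Monad.bind (measure_pmf (bernoulli_pmf u)) (\<lambda>b. if b then M else N)"

lemma
  assumes "sets N = sets M" "prob_space M" "prob_space N"
  shows sets_mixture: "sets (mixture u M N) = sets M"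
    and space_mixture: "space (mixture u M N) = space M"
    and prob_space_mixture: "prob_space (mixture u M N)"
proof -
  show sets: "sets (mixture u M N) = sets M"
    unfolding mixture_def by (rule sets_bind) (use assms(1) in auto)
  then show "space (mixture u M N) = space M" by (rule sets_eq_imp_space_eq)
  show "prob_space (mixture u M N)"
    unfolding mixture_def
  proof (rule prob_space_bind')
    show "(\<lambda>b. if b then M else N) \<in> measure_pmf (bernoulli_pmf u) \<rightarrow>\<^sub>M prob_algebra M"
      using assms by (auto simp: space_prob_algebra)
  qed (simp add: space_prob_algebra prob_space_measure_pmf)
qed

lemma emeasure_mixture_null:
  assumes "sets N = sets M" "prob_space M" "prob_space N"
    and "A \<in> sets M" "emeasure M A = 0" "emeasure N A = 0"
  shows "emeasure (mixture u M N) A = 0"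
proof -
  have "\<And>b. emeasure (if b then M else N) A = 0" using assms(5,6) by simp
  then show ?thesis
    unfolding mixture_def using assms(1-4)
    by (subst emeasure_bind[where N = M])
       (auto simp: space_subprob_algebra prob_space_imp_subprob_space)
qed

lemma integral_mixture:
  fixes q :: "'a \<Rightarrow> real"
  assumes "sets N = sets M" "prob_space M" "prob_space N" "0 \<le> u" "u \<le> 1"
    and "q \<in> borel_measurable M" "\<And>z. z \<in> space M \<Longrightarrow> \<bar>q z\<bar> \<le> B"
  shows "(\<integral>z. q z \<partial>mixture u M N) = u * (\<integral>z. q z \<partial>M) + (1 - u) * (\<integral>z. q z \<partial>N)"
proof -
  have "(\<integral>z. q z \<partial>mixture u M N) =
      (\<integral>b. (\<integral>z. q z \<partial>(if b then M else N)) \<partial>measure_pmf (bernoulli_pmf u))"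
    unfolding mixture_def using assms
    by (intro integral_bind[where K = M and B' = 1])
       (auto simp: space_subprob_algebra prob_space_imp_subprob_space prob_space.emeasure_space_1
                   prob_space_measure_pmf prob_space.finite_measure)
  also have "\<dots> = u * (\<integral>z. q z \<partial>M) + (1 - u) * (\<integral>z. q z \<partial>N)"
    using assms(4,5) by (simp add: algebra_simps)
  finally show ?thesis .
qed

lemma measure_mixture:
  assumes "sets N = sets M" "prob_space M" "prob_space N" "0 \<le> u" "u \<le> 1" "A \<in> sets M"
  shows "measure (mixture u M N) A = u * measure M A + (1 - u) * measure N A"
proof -
  have "A \<subseteq> space M" "A \<subseteq> space N"
    using assms(1,6) sets.sets_into_space sets_eq_imp_space_eq[OF assms(1)] by auto
  then show ?thesis
    using integral_mixture[OF assms(1-5), of "indicator A" 1] assms(6)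
    by (simp add: space_mixture[OF assms(1-3)] Int_absorb2)
qed

definition continuous_affine_funs :: "'a::real_normed_vector set \<Rightarrow> ('a \<Rightarrow> real) set" where
  "continuous_affine_funs T = {g. continuous_on T g \<and> affine_fun_on T g}"

lemma continuous_affine_funs_sum:
  assumes "G \<subseteq> continuous_affine_funs T"
  shows "(\<lambda>x. \<Sum>g\<in>G. c g * g x) \<in> continuous_affine_funs T"
  using assms unfolding continuous_affine_funs_def
  by (auto intro!: continuous_on_sum continuous_on_mult_left affine_fun_on_sum)

lemma rep_measure_rep_meas:
  assumes "metrizable_choquet_simplex T" "t \<in> T"
  shows "rep_measure T t (rep_meas T t)"
  using assms unfolding metrizable_choquet_simplex_def rep_meas_def by (metis theI')

lemma rep_meas_unique:
  assumes "metrizable_choquet_simplex T" "t \<in> T" "rep_measure T t \<mu>"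
  shows "rep_meas T t = \<mu>"
  using assms unfolding metrizable_choquet_simplex_def rep_meas_def by (metis the1_equality)

lemma
  assumes "rep_measure T t \<mu>"
  shows sets_rep_measure: "sets \<mu> = sets (restrict_space borel T)"
    and space_rep_measure: "space \<mu> = T"
    and prob_space_rep_measure: "prob_space \<mu>"
    and ext_bdry_in_sets_rep_measure: "ext_bdry T \<in> sets \<mu>"
    and emeasure_rep_measure_non_ext: "emeasure \<mu> (T - ext_bdry T) = 0"
    and rep_measure_barycenter:
      "\<And>f. f \<in> continuous_affine_funs T \<Longrightarrow> f t = (\<integral>x. f x \<partial>\<mu>)"
  using assms unfolding rep_measure_def continuous_affine_funs_def by blast+

lemma integrable_rep_measure:
  fixes h :: "'a::real_normed_vector \<Rightarrow> real"
  assumes \<mu>: "rep_measure T t \<mu>" and "compact T" "continuous_on T h"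
  shows "integrable \<mu> h"
proof -
  interpret prob_space \<mu> by (rule prob_space_rep_measure[OF \<mu>])
  obtain B where B: "\<And>x. x \<in> T \<Longrightarrow> norm (h x) \<le> B"
    using continuous_on_compact_bound[OF assms(2,3)] by blast
  have "h \<in> borel_measurable \<mu>"
    using borel_measurable_continuous_on_restrict[OF assms(3)]
    by (simp add: sets_rep_measure[OF \<mu>] cong: measurable_cong_sets)
  then show ?thesis
    using B by (intro integrable_const_bound[where B = B] AE_I2)
      (simp_all add: space_rep_measure[OF \<mu>])
qed

lemma AE_rep_measure_ext_bdry:
  assumes \<mu>: "rep_measure T t \<mu>"
  shows "AE x in \<mu>. x \<in> ext_bdry T"
proof (rule AE_I')
  show "T - ext_bdry T \<in> null_sets \<mu>"
    using emeasure_rep_measure_non_ext[OF \<mu>] ext_bdry_in_sets_rep_measure[OF \<mu>]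
      sets.top[of \<mu>] space_rep_measure[OF \<mu>]
    by (simp add: null_sets_def sets.Diff)
  show "{x \<in> space \<mu>. x \<notin> ext_bdry T} \<subseteq> T - ext_bdry T"
    by (auto simp: space_rep_measure[OF \<mu>])
qed

lemma rep_measure_le_if_le_on_ext_bdry:
  assumes \<mu>: "rep_measure T t \<mu>" and "compact T" "h \<in> continuous_affine_funs T"
    and "\<And>x. x \<in> ext_bdry T \<Longrightarrow> h x \<le> c"
  shows "h t \<le> c"
proof -
  interpret prob_space \<mu> by (rule prob_space_rep_measure[OF \<mu>])
  have "h t = (\<integral>x. h x \<partial>\<mu>)" by (rule rep_measure_barycenter[OF \<mu> assms(3)])
  also have "\<dots> \<le> (\<integral>x. c \<partial>\<mu>)"
    using assms(3,4) AE_rep_measure_ext_bdry[OF \<mu>]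
    by (intro integral_mono_AE integrable_rep_measure[OF \<mu> assms(2)])
       (auto simp: continuous_affine_funs_def elim: AE_mp)
  also have "\<dots> = c" by (simp add: prob_space)
  finally show ?thesis .
qed

lemma rep_meas_eq_if_agree:
  assumes S: "metrizable_choquet_simplex T" and "s \<in> T" "t \<in> T"
    and agree: "\<forall>g\<in>continuous_affine_funs T. g s = g t"
  shows "rep_meas T s = rep_meas T t"
proof (rule rep_meas_unique[OF S \<open>s \<in> T\<close>])
  show "rep_measure T s (rep_meas T t)"
    using rep_measure_rep_meas[OF S \<open>t \<in> T\<close>] agree
    unfolding rep_measure_def continuous_affine_funs_def by (elim conjE) (intro conjI; simp)
qed

lemma rep_measure_mixture:
  assumes "compact T" "x \<in> T" "y \<in> T" "0 \<le> u" "u \<le> 1"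
    and Mx: "rep_measure T x Mx" and My: "rep_measure T y My"
  shows "rep_measure T (u *\<^sub>R x + (1 - u) *\<^sub>R y) (mixture u Mx My)"
proof -
  have sets: "sets My = sets Mx" and prob: "prob_space Mx" "prob_space My"
    using sets_rep_measure[OF Mx] sets_rep_measure[OF My] prob_space_rep_measure[OF Mx]
      prob_space_rep_measure[OF My] by simp_all
  note mix = sets_mixture[OF sets prob] space_mixture[OF sets prob]
  have "T - ext_bdry T \<in> sets Mx"
    using sets.top[of Mx] ext_bdry_in_sets_rep_measure[OF Mx] space_rep_measure[OF Mx] by auto
  then have null: "emeasure (mixture u Mx My) (T - ext_bdry T) = 0"
    using emeasure_rep_measure_non_ext[OF Mx] emeasure_rep_measure_non_ext[OF My]
    by (intro emeasure_mixture_null[OF sets prob])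
  have "h (u *\<^sub>R x + (1 - u) *\<^sub>R y) = (\<integral>z. h z \<partial>mixture u Mx My)"
    if h: "continuous_on T h" "affine_fun_on T h" for h
  proof -
    obtain B where B: "\<And>z. z \<in> T \<Longrightarrow> norm (h z) \<le> B"
      using continuous_on_compact_bound[OF assms(1) h(1)] by blast
    have "h \<in> borel_measurable Mx"
      using borel_measurable_continuous_on_restrict[OF h(1)]
      by (simp add: sets_rep_measure[OF Mx] cong: measurable_cong_sets)
    then have "(\<integral>z. h z \<partial>mixture u Mx My) = u * (\<integral>z. h z \<partial>Mx) + (1 - u) * (\<integral>z. h z \<partial>My)"
      using B assms(4,5)
      by (intro integral_mixture[OF sets prob]) (auto simp: space_rep_measure[OF Mx])
    also have "\<dots> = u * h x + (1 - u) * h y"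
      using h rep_measure_barycenter[OF Mx] rep_measure_barycenter[OF My]
      by (simp add: continuous_affine_funs_def)
    also have "\<dots> = h (u *\<^sub>R x + (1 - u) *\<^sub>R y)"
      using h(2) assms(2-5) by (simp add: affine_fun_on_def)
    finally show ?thesis by simp
  qed
  then show ?thesis
    using mix null sets_rep_measure[OF Mx] space_rep_measure[OF Mx] prob_space_mixture[OF sets prob]
      ext_bdry_in_sets_rep_measure[OF Mx]
    unfolding rep_measure_def by simp
qed

lemma rep_meas_convex_combination:
  assumes S: "metrizable_choquet_simplex T" and "x \<in> T" "y \<in> T" "0 \<le> u" "u \<le> 1"
  shows "rep_meas T (u *\<^sub>R x + (1 - u) *\<^sub>R y) = mixture u (rep_meas T x) (rep_meas T y)"
proof (rule rep_meas_unique[OF S])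
  show "u *\<^sub>R x + (1 - u) *\<^sub>R y \<in> T"
    using S assms by (intro convexD) (auto simp: metrizable_choquet_simplex_def)
  show "rep_measure T (u *\<^sub>R x + (1 - u) *\<^sub>R y) (mixture u (rep_meas T x) (rep_meas T y))"
    using S assms
    by (intro rep_measure_mixture rep_measure_rep_meas) (auto simp: metrizable_choquet_simplex_def)
qed

lemma affine_fun_on_measure_rep_meas:
  assumes S: "metrizable_choquet_simplex T" and A: "A \<in> sets (restrict_space borel T)"
  shows "affine_fun_on T (\<lambda>t. measure (rep_meas T t) A)"
  unfolding affine_fun_on_def
proof (intro ballI allI impI)
  fix x y and u :: real assume xy: "x \<in> T" "y \<in> T" and u: "0 \<le> u \<and> u \<le> 1"
  note Mx = rep_measure_rep_meas[OF S xy(1)] and My = rep_measure_rep_meas[OF S xy(2)]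
  show "measure (rep_meas T (u *\<^sub>R x + (1 - u) *\<^sub>R y)) A =
      u * measure (rep_meas T x) A + (1 - u) * measure (rep_meas T y) A"
    unfolding rep_meas_convex_combination[OF S xy u[THEN conjunct1] u[THEN conjunct2]]
    using u A sets_rep_measure[OF Mx] sets_rep_measure[OF My] prob_space_rep_measure[OF Mx]
      prob_space_rep_measure[OF My]
    by (intro measure_mixture) auto
qed

lemma measure_rep_meas_M_set:
  assumes S: "metrizable_choquet_simplex T" and A: "A \<in> sets (restrict_space borel T)"
    and t: "t \<in> M_set T A"
  shows "measure (rep_meas T t) A = 1"
proof -
  have "t \<in> T" using t by (simp add: M_set_def)
  note \<mu> = rep_measure_rep_meas[OF S this]
  interpret prob_space "rep_meas T t" by (rule prob_space_rep_measure[OF \<mu>])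
  have "ext_bdry T - A \<in> null_sets (rep_meas T t)"
    using t A ext_bdry_in_sets_rep_measure[OF \<mu>] sets_rep_measure[OF \<mu>]
    by (auto simp: M_set_def null_sets_def)
  then have "AE x in rep_meas T t. x \<notin> ext_bdry T - A" by (rule AE_not_in)
  then have "AE x in rep_meas T t. x \<in> A"
    using AE_rep_measure_ext_bdry[OF \<mu>] by eventually_elim blast
  then show ?thesis using A sets_rep_measure[OF \<mu>] by (simp add: prob_eq_1)
qed

lemma M_set_subset: "M_set T A \<subseteq> T"
  by (auto simp: M_set_def)

lemma
  assumes "metrizable_choquet_simplex T" and M_A: "M_set T A = closure (convex hull A)"
  shows compact_M_set: "compact (M_set T A)"
    and convex_M_set: "convex (M_set T A)"
    and subset_M_set: "A \<subseteq> M_set T A"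
proof -
  have "compact T" using assms(1) by (simp add: metrizable_choquet_simplex_def)
  then show "compact (M_set T A)"
    using compact_Int_closed[of T "M_set T A"] M_A M_set_subset[of T A] by (simp add: Int_absorb1)
  show "convex (M_set T A)" "A \<subseteq> M_set T A"
    using M_A closure_subset[of "convex hull A"] hull_subset[of A convex]
    by (auto simp: convex_closure)
qed

lemma measure_rep_meas_M_set_disjoint:
  assumes "ext_bdry T = Y \<union> Z" "Y \<inter> Z = {}" "t \<in> M_set T Z"
  shows "measure (rep_meas T t) Y = 0"
proof -
  have "ext_bdry T - Z = Y" using assms(1,2) by blast
  then show ?thesis using assms(3) by (simp add: M_set_def measure_def)
qed

lemma ext_bdry_subset: "ext_bdry T \<subseteq> T"
  by (auto simp: ext_bdry_def extreme_point_of_def)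

lemma exists_agreeing_point_finite:
  assumes S: "metrizable_choquet_simplex T" and K: "K \<subseteq> T" "compact K" "convex K" "K \<noteq> {}"
    and ext: "ext_bdry T \<subseteq> K" and t: "t \<in> T"
    and G: "finite G" "G \<subseteq> continuous_affine_funs T"
  shows "\<exists>k\<in>K. \<forall>g\<in>G. g k = g t"
proof -
  define \<phi> where "\<phi> k = (\<Sum>g\<in>G. (g k - g t)\<^sup>2)" for k
  have "continuous_on K g" if "g \<in> G" for g
    using that G(2) K(1) by (auto simp: continuous_affine_funs_def intro: continuous_on_subset)
  then have "continuous_on K \<phi>"
    unfolding \<phi>_def
    by (intro continuous_on_sum continuous_on_power continuous_on_diff continuous_on_const)
  then obtain k0 where k0: "k0 \<in> K" "\<And>k. k \<in> K \<Longrightarrow> \<phi> k0 \<le> \<phi> k"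
    using continuous_attains_inf[OF K(2,4)] by blast
  define h where "h x = (\<Sum>g\<in>G. (g t - g k0) * g x)" for x
  have h_diff: "h x - h k0 = (\<Sum>g\<in>G. (g t - g k0) * (g x - g k0))" for x
    by (simp add: h_def right_diff_distrib sum_subtractf)
  have h_max: "h k \<le> h k0" if "k \<in> K" for k
  proof -
    have "h k - h k0 \<le> 0"
      unfolding h_diff using G(2) K(1,3) k0 that
      by (intro sum_squares_minimizer_variational_ineq[where K = K])
         (auto simp: \<phi>_def continuous_affine_funs_def intro: affine_fun_on_subset)
    then show ?thesis by simp
  qed
  have "compact T" using S by (simp add: metrizable_choquet_simplex_def)
  moreover have "h \<in> continuous_affine_funs T"
    unfolding h_def by (rule continuous_affine_funs_sum[OF G(2)])
  ultimately have "h t \<le> h k0"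
    by (rule rep_measure_le_if_le_on_ext_bdry[OF rep_measure_rep_meas[OF S t]])
       (use h_max ext in blast)
  moreover have "h t - h k0 = \<phi> k0"
    unfolding h_diff \<phi>_def by (intro sum.cong refl) (simp add: power2_eq_square algebra_simps)
  ultimately have "\<phi> k0 \<le> 0" by simp
  then have "\<forall>g\<in>G. (g k0 - g t)\<^sup>2 = 0"
    using G(1) sum_nonneg_eq_0_iff[of G "\<lambda>g. (g k0 - g t)\<^sup>2"]
    by (simp add: \<phi>_def order_antisym sum_nonneg)
  with k0(1) show ?thesis by auto
qed

lemma exists_agreeing_point:
  assumes S: "metrizable_choquet_simplex T" and K: "K \<subseteq> T" "compact K" "convex K" "K \<noteq> {}"
    and ext: "ext_bdry T \<subseteq> K" and t: "t \<in> T"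
  shows "\<exists>k\<in>K. \<forall>g\<in>continuous_affine_funs T. g k = g t"
proof -
  let ?C = "(\<lambda>g. {k\<in>K. g k = g t}) ` continuous_affine_funs T"
  have "K \<inter> \<Inter>?C \<noteq> {}"
  proof (rule compact_imp_fip[OF K(2)])
    fix U assume "U \<in> ?C"
    then obtain g where g: "g \<in> continuous_affine_funs T" and U: "U = {k\<in>K. g k = g t}" by blast
    have "continuous_on K g"
      using g K(1) by (auto simp: continuous_affine_funs_def intro: continuous_on_subset)
    then show "closed U"
      unfolding U by (rule continuous_closed_preimage_constant[OF _ compact_imp_closed[OF K(2)]])
  next
    fix C' assume "finite C'" "C' \<subseteq> ?C"
    then obtain G where G: "G \<subseteq> continuous_affine_funs T" "finite G"
      and C': "C' = (\<lambda>g. {k\<in>K. g k = g t}) ` G"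
      by (meson finite_subset_image)
    obtain k where "k \<in> K" "\<forall>g\<in>G. g k = g t"
      using exists_agreeing_point_finite[OF assms G(2,1)] by blast
    then have "k \<in> K \<inter> \<Inter>C'" unfolding C' by blast
    then show "K \<inter> \<Inter>C' \<noteq> {}" by blast
  qed
  then obtain k where "k \<in> K \<inter> \<Inter>?C" by blast
  then show ?thesis by blast
qed

lemma exists_agreeing_convex_combination:
  assumes S: "metrizable_choquet_simplex T"
    and P: "P \<subseteq> T" "compact P" "convex P" "P \<noteq> {}"
    and Q: "Q \<subseteq> T" "compact Q" "convex Q" "Q \<noteq> {}"
    and ext: "ext_bdry T \<subseteq> P \<union> Q" and t: "t \<in> T"
  shows "\<exists>a\<in>{0..1}. \<exists>y\<in>P. \<exists>z\<in>Q. \<forall>g\<in>continuous_affine_funs T. g (a *\<^sub>R y + (1 - a) *\<^sub>R z) = g t"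
proof -
  note hull = convex_hull_Un_eq_image[OF P(3) Q(3) P(4) Q(4)]
  have compact: "compact (convex hull (P \<union> Q))"
    unfolding hull using P(2) Q(2) by (intro compact_convex_combinations compact_Icc)
  have sub: "convex hull (P \<union> Q) \<subseteq> T"
    using S P(1) Q(1) by (intro hull_minimal) (auto simp: metrizable_choquet_simplex_def)
  have ne: "convex hull (P \<union> Q) \<noteq> {}" using P(4) by simp
  have "ext_bdry T \<subseteq> convex hull (P \<union> Q)"
    using ext hull_subset[of "P \<union> Q" convex] by (rule order.trans)
  then obtain k where k: "k \<in> convex hull (P \<union> Q)" "\<forall>g\<in>continuous_affine_funs T. g k = g t"
    using exists_agreeing_point[OF S sub compact convex_convex_hull ne _ t] by blast
  from k(1) obtain a y z where "a \<in> {0..1}" "y \<in> P" "z \<in> Q" "k = a *\<^sub>R y + (1 - a) *\<^sub>R z"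
    unfolding hull by auto
  with k(2) show ?thesis by blast
qed

lemma continuous_on_if_affine_one_zero:
  assumes S: "metrizable_choquet_simplex T"
    and P: "P \<subseteq> T" "compact P" "convex P" "P \<noteq> {}"
    and Q: "Q \<subseteq> T" "compact Q" "convex Q" "Q \<noteq> {}"
    and ext: "ext_bdry T \<subseteq> P \<union> Q"
    and F: "affine_fun_on T F" "\<And>y. y \<in> P \<Longrightarrow> F y = 1" "\<And>z. z \<in> Q \<Longrightarrow> F z = 0"
    and F_agree: "\<And>s t. s \<in> T \<Longrightarrow> t \<in> T \<Longrightarrow> \<forall>g\<in>continuous_affine_funs T. g s = g t \<Longrightarrow> F s = F t"
  shows "continuous_on T F"
proof -
  have T: "compact T" "convex T" using S by (auto simp: metrizable_choquet_simplex_def)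
  define J where "J C = (\<lambda>(a, y, z). a *\<^sub>R y + (1 - a) *\<^sub>R z) ` (C \<times> P \<times> Q)" for C :: "real set"
  have comb_T: "a *\<^sub>R y + (1 - a) *\<^sub>R z \<in> T" if "a \<in> {0..1}" "y \<in> P" "z \<in> Q" for a y z
    using that P(1) Q(1) by (intro convexD[OF T(2)]) auto
  have F_comb: "F (a *\<^sub>R y + (1 - a) *\<^sub>R z) = a" if "a \<in> {0..1}" "y \<in> P" "z \<in> Q" for a y z
  proof -
    have "F (a *\<^sub>R y + (1 - a) *\<^sub>R z) = a * F y + (1 - a) * F z"
      using F(1) that P(1) Q(1) unfolding affine_fun_on_def atLeastAtMost_iff by blast
    then show ?thesis using F(2,3) that by simp
  qed
  have "F -` B \<inter> T = {t\<in>T. \<exists>k\<in>J (B \<inter> {0..1}). \<forall>g\<in>continuous_affine_funs T. g k = g t}" for B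
  proof (intro equalityI subsetI)
    fix t assume "t \<in> F -` B \<inter> T"
    then have t: "t \<in> T" "F t \<in> B" by auto
    then obtain a y z where ayz: "a \<in> {0..1}" "y \<in> P" "z \<in> Q"
      and agree: "\<forall>g\<in>continuous_affine_funs T. g (a *\<^sub>R y + (1 - a) *\<^sub>R z) = g t"
      using exists_agreeing_convex_combination[OF S P Q ext] by blast
    have "a \<in> B" using F_agree[OF comb_T[OF ayz] t(1) agree] F_comb[OF ayz] t(2) by simp
    then have "a *\<^sub>R y + (1 - a) *\<^sub>R z \<in> J (B \<inter> {0..1})"
      unfolding J_def using ayz by (intro image_eqI[where x = "(a, y, z)"]) auto
    with t(1) agree show "t \<in> {t\<in>T. \<exists>k\<in>J (B \<inter> {0..1}). \<forall>g\<in>continuous_affine_funs T. g k = g t}"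
      by blast
  next
    fix t assume "t \<in> {t\<in>T. \<exists>k\<in>J (B \<inter> {0..1}). \<forall>g\<in>continuous_affine_funs T. g k = g t}"
    then obtain a y z where t: "t \<in> T" and ayz: "a \<in> B" "a \<in> {0..1}" "y \<in> P" "z \<in> Q"
      and agree: "\<forall>g\<in>continuous_affine_funs T. g (a *\<^sub>R y + (1 - a) *\<^sub>R z) = g t"
      unfolding J_def by auto
    show "t \<in> F -` B \<inter> T"
      using F_agree[OF comb_T[OF ayz(2-4)] t agree] F_comb[OF ayz(2-4)] ayz(1) t by simp
  qed
  moreover have "closed {t\<in>T. \<exists>k\<in>J (B \<inter> {0..1}). \<forall>g\<in>continuous_affine_funs T. g k = g t}"
    if "closed B" for B
  proof (rule closed_agreeing_with_compact)
    show "compact (J (B \<inter> {0..1}))"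
      unfolding J_def using closed_Int_compact[OF that compact_Icc] P(2) Q(2)
      by (rule compact_convex_combinations)
    show "J (B \<inter> {0..1}) \<subseteq> T" unfolding J_def using comb_T by auto
  qed (use T(1) in \<open>auto simp: continuous_affine_funs_def compact_imp_closed\<close>)
  ultimately show ?thesis
    using compact_imp_closed[OF T(1)] by (simp add: continuous_on_closed_vimage)
qed

lemma continuous_on_measure_rep_meas:
  assumes S: "metrizable_choquet_simplex T"
    and "ext_bdry T = Y \<union> Z" "Y \<inter> Z = {}" and Y: "Y \<in> sets (restrict_space borel T)"
    and M_Y: "M_set T Y = closure (convex hull Y)" "M_set T Y \<noteq> {}"
    and M_Z: "M_set T Z = closure (convex hull Z)" "M_set T Z \<noteq> {}"
  shows "continuous_on T (\<lambda>t. measure (rep_meas T t) Y)"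
proof (rule continuous_on_if_affine_one_zero[OF S, of "M_set T Y" "M_set T Z"])
  show "ext_bdry T \<subseteq> M_set T Y \<union> M_set T Z"
    using assms(2) subset_M_set[OF S M_Y(1)] subset_M_set[OF S M_Z(1)] by blast
  show "measure (rep_meas T t) Y = 0" if "t \<in> M_set T Z" for t
    using measure_rep_meas_M_set_disjoint[OF assms(2,3) that] .
  show "measure (rep_meas T s) Y = measure (rep_meas T t) Y"
    if "s \<in> T" "t \<in> T" "\<forall>g\<in>continuous_affine_funs T. g s = g t" for s t
    using rep_meas_eq_if_agree[OF S that] by simp
qed (simp_all add: M_set_subset compact_M_set[OF S M_Y(1)] compact_M_set[OF S M_Z(1)]
    convex_M_set[OF S M_Y(1)] convex_M_set[OF S M_Z(1)] M_Y(2) M_Z(2)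
    affine_fun_on_measure_rep_meas[OF S Y] measure_rep_meas_M_set[OF S Y])

theorem corollary2p15:
  fixes T :: "'a::real_normed_vector set" and Y Z :: "'a set"
  assumes "metrizable_choquet_simplex T"
    and "ext_bdry T = Y \<union> Z" and "Y \<inter> Z = {}"
    and "Y \<in> sets borel" and "Z \<in> sets borel"
    and "M_set T Y = closure (convex hull Y)"
    and "M_set T Z = closure (convex hull Z)"
  shows "\<exists>f :: 'a \<Rightarrow> real. continuous_on T f \<and> affine_fun_on T f \<and>
           (\<forall>t\<in>T. 0 \<le> f t \<and> f t \<le> 1) \<and>
           (\<forall>t\<in>M_set T Y. f t = 1) \<and> (\<forall>t\<in>M_set T Z. f t = 0)"
proof -
  note S = assms(1)
  consider "M_set T Y = {}" | "M_set T Z = {}" | "M_set T Y \<noteq> {}" "M_set T Z \<noteq> {}" by blast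
  then show ?thesis
  proof cases
    case 1
    then show ?thesis by (intro exI[of _ "\<lambda>_. 0"]) (simp add: affine_fun_on_def)
  next
    case 2
    then show ?thesis by (intro exI[of _ "\<lambda>_. 1"]) (simp add: affine_fun_on_def)
  next
    case 3
    have Y: "Y \<in> sets (restrict_space borel T)"
      using assms(2,4) ext_bdry_subset[of T]
      by (auto simp: sets_restrict_space intro!: image_eqI[where x = Y])
    have "0 \<le> measure (rep_meas T t) Y \<and> measure (rep_meas T t) Y \<le> 1" if "t \<in> T" for t
      using prob_space.prob_le_1[OF prob_space_rep_measure[OF rep_measure_rep_meas[OF S that]]]
      by simp
    then show ?thesis
      using continuous_on_measure_rep_meas[OF S assms(2,3) Y assms(6) 3(1) assms(7) 3(2)]
        affine_fun_on_measure_rep_meas[OF S Y] measure_rep_meas_M_set[OF S Y]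
        measure_rep_meas_M_set_disjoint[OF assms(2,3)]
      by (intro exI[of _ "\<lambda>t. measure (rep_meas T t) Y"]) blast
  qed
qed

end
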